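(* Let $W\subseteq C^\omega$ be a prefix-independent objective, $\kappa$ a cardinal, and $U$ a $C$-graph which is almost $(\kappa,W)$-universal. Then the $C$-graph $U\ltimes\kappa$ is $(\kappa,W)$-universal for prefix-independent objectives.
   Context: A $C$-pregraph: vertex set $V(G)$, edges $E(G)\subseteq V(G)\times C\times V(G)$ written $v\xrightarrow{c}v'$; a $C$-graph if every vertex has an outgoing edge. A $C$-pretree is a $C$-pregraph with root $t_0$ such that every vertex has a unique path from $t_0$; for a vertex $t$, $T[t]$ is the restriction of $T$ to vertices reachable from $t$. A morphism maps vertices so that $v\xrightarrow{c}v'$ implies $\phi(v)\xrightarrow{c}\phi(v')$. A (pre)graph satisfies $W$ if every infinite path from every vertex has colour sequence in $W$. $W$ is prefix-independent if $uw\in W\iff w\in W$ for all $u\in C^*,w\in C^\omega$. $U$ is almost $(\kappa,W)$-universal if $U$ satisfies $W$ and every $C$-pretree $T$ of cardinality $<\kappa$ satisfying $W$ has a vertex $t$ such that $T[t]$ admits a morphism into $U$. $U$ is $(\kappa,W)$-universal for prefix-independent objectives if $U$ satisfies $W$ and every $C$-pretree of cardinality $<\kappa$ satisfying $W$ admits a morphism into $U$. For an ordinal $\alpha$, $U\ltimes\alpha$ is the graph with vertex set $V(U)\times\alpha$ and edges $(v,\lambda)\xrightarrow{c}(v',\lambda')$ whenever $\lambda>\lambda'$, or $\lambda=\lambda'$ and $v\xrightarrow{c}v'\in E(U)$. *)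

theory Defs
  imports Main
begin

type_synonym ('v, 'c) pregraph = "'v set \<times> ('v \<times> 'c \<times> 'v) set"

definition verts :: "('v, 'c) pregraph \<Rightarrow> 'v set" where
  "verts G = fst G"

definition edges :: "('v, 'c) pregraph \<Rightarrow> ('v \<times> 'c \<times> 'v) set" where
  "edges G = snd G"

definition is_pregraph :: "('v, 'c) pregraph \<Rightarrow> bool" where
  "is_pregraph G \<longleftrightarrow> edges G \<subseteq> verts G \<times> UNIV \<times> verts G"

definition is_cgraph :: "('v, 'c) pregraph \<Rightarrow> bool" where
  "is_cgraph G \<longleftrightarrow> is_pregraph G \<and> (\<forall>v\<in>verts G. \<exists>c v'. (v, c, v') \<in> edges G)"

fun fpath :: "('v \<times> 'c \<times> 'v) set \<Rightarrow> 'v \<Rightarrow> ('v \<times> 'c \<times> 'v) list \<Rightarrow> 'v \<Rightarrow> bool" where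
  "fpath E a [] b \<longleftrightarrow> a = b"
| "fpath E a (e # es) b \<longleftrightarrow> fst e = a \<and> e \<in> E \<and> fpath E (snd (snd e)) es b"

definition is_pretree :: "('v, 'c) pregraph \<Rightarrow> 'v \<Rightarrow> bool" where
  "is_pretree T t0 \<longleftrightarrow> is_pregraph T \<and> t0 \<in> verts T \<and>
     (\<forall>t\<in>verts T. \<exists>!es. fpath (edges T) t0 es t)"

definition subtree :: "('v, 'c) pregraph \<Rightarrow> 'v \<Rightarrow> ('v, 'c) pregraph" where
  "subtree T t =
     (let V' = {v \<in> verts T. \<exists>es. fpath (edges T) t es v}
      in (V', edges T \<inter> (V' \<times> UNIV \<times> V')))"

definition is_morphism :: "('v, 'c) pregraph \<Rightarrow> ('w, 'c) pregraph \<Rightarrow> ('v \<Rightarrow> 'w) \<Rightarrow> bool" where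
  "is_morphism G H \<phi> \<longleftrightarrow> (\<forall>v\<in>verts G. \<phi> v \<in> verts H) \<and>
     (\<forall>v c v'. (v, c, v') \<in> edges G \<longrightarrow> (\<phi> v, c, \<phi> v') \<in> edges H)"

definition satisfies :: "('v, 'c) pregraph \<Rightarrow> (nat \<Rightarrow> 'c) set \<Rightarrow> bool" where
  "satisfies G W \<longleftrightarrow> (\<forall>(vs :: nat \<Rightarrow> 'v) (cs :: nat \<Rightarrow> 'c).
     vs 0 \<in> verts G \<and> (\<forall>i. (vs i, cs i, vs (Suc i)) \<in> edges G) \<longrightarrow> cs \<in> W)"

definition conc :: "'c list \<Rightarrow> (nat \<Rightarrow> 'c) \<Rightarrow> (nat \<Rightarrow> 'c)" where
  "conc u w = (\<lambda>i. if i < length u then u ! i else w (i - length u))"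

definition prefix_independent :: "(nat \<Rightarrow> 'c) set \<Rightarrow> bool" where
  "prefix_independent W \<longleftrightarrow> (\<forall>u w. conc u w \<in> W \<longleftrightarrow> w \<in> W)"

text \<open>Cardinal kappa is given as a cardinal well-order r (Card_order r); the
  ordinal kappa is the set Field r, ordered strictly by r - Id.
  Trees have vertex type 't, which is fixed at the theorem level.\<close>
definition almost_universal ::
  "'k rel \<Rightarrow> (nat \<Rightarrow> 'c) set \<Rightarrow> ('v, 'c) pregraph \<Rightarrow> 't itself \<Rightarrow> bool" where
  "almost_universal r W U (_ :: 't itself) \<longleftrightarrow> satisfies U W \<and>
     (\<forall>(T :: ('t, 'c) pregraph) t0. is_pretree T t0 \<and> (card_of (verts T), r) \<in> ordLess \<and> satisfies T W \<longrightarrow>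
        (\<exists>t\<in>verts T. \<exists>\<phi> :: 't \<Rightarrow> 'v. is_morphism (subtree T t) U \<phi>))"

definition universal_pi ::
  "'k rel \<Rightarrow> (nat \<Rightarrow> 'c) set \<Rightarrow> ('v, 'c) pregraph \<Rightarrow> 't itself \<Rightarrow> bool" where
  "universal_pi r W U (_ :: 't itself) \<longleftrightarrow> satisfies U W \<and>
     (\<forall>(T :: ('t, 'c) pregraph) t0. is_pretree T t0 \<and> (card_of (verts T), r) \<in> ordLess \<and> satisfies T W \<longrightarrow>
        (\<exists>\<phi> :: 't \<Rightarrow> 'v. is_morphism T U \<phi>))"

definition lex_prod :: "('v, 'c) pregraph \<Rightarrow> 'k rel \<Rightarrow> ('v \<times> 'k, 'c) pregraph" where
  "lex_prod U r =
     (verts U \<times> Field r,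
      {((v, l), c, (v', l')) | v l c v' l'.
         v \<in> verts U \<and> v' \<in> verts U \<and> l \<in> Field r \<and> l' \<in> Field r \<and>
         (((l', l) \<in> r \<and> l' \<noteq> l) \<or> (l = l' \<and> (v, c, v') \<in> edges U))})"

end

theory Submission
  imports Defs
begin

text \<open>Given a pretree T of size below \<kappa> satisfying W, remove from T a successor-closed set X of
  vertices: what remains is again a pretree of size below \<kappa> satisfying W, so almost universality
  yields a vertex t whose subtree in the remainder maps into U. Peeling off such blocks along
  \<kappa> by transfinite recursion, the union of the blocks of all earlier stages stays successor-closed;
  as the blocks are disjoint and nonempty while |T| < \<kappa>, they exhaust T. Mapping the block of
  stage \<lambda> into U \<times> {\<lambda>} gives a morphism into U \<ltimes> \<kappa>, because edges never lead to a later
  block. Finally U \<ltimes> \<kappa> satisfies W: along an infinite path the ordinal component decreases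
  weakly, hence is eventually constant, after which the path is a path of U, and W is
  prefix-independent.\<close>

unbundle cardinal_syntax

lemma fpath_append:
  "fpath E a (xs @ ys) b \<longleftrightarrow> (\<exists>m. fpath E a xs m \<and> fpath E m ys b)"
  by (induction xs arbitrary: a) auto

lemma fpath_mono: "fpath E a es b \<Longrightarrow> E \<subseteq> E' \<Longrightarrow> fpath E' a es b"
  by (induction es arbitrary: a) auto

definition succ_closed :: "('a \<times> 'c \<times> 'a) set \<Rightarrow> 'a set \<Rightarrow> bool" where
  "succ_closed E X \<longleftrightarrow> (\<forall>v c w. (v, c, w) \<in> E \<longrightarrow> v \<in> X \<longrightarrow> w \<in> X)"

lemma fpath_succ_closed: "fpath E a es b \<Longrightarrow> succ_closed E X \<Longrightarrow> a \<in> X \<Longrightarrow> b \<in> X"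
  by (induction es arbitrary: a) (auto simp: succ_closed_def)

lemma succ_closed_UN: "(\<And>i. i \<in> I \<Longrightarrow> succ_closed E (A i)) \<Longrightarrow> succ_closed E (\<Union>i\<in>I. A i)"
  unfolding succ_closed_def by blast

definition induced_subgraph :: "('v, 'c) pregraph \<Rightarrow> 'v set \<Rightarrow> ('v, 'c) pregraph" where
  "induced_subgraph G A = (A, edges G \<inter> (A \<times> UNIV \<times> A))"

lemma verts_induced_subgraph [simp]: "verts (induced_subgraph G A) = A"
  and edges_induced_subgraph [simp]: "edges (induced_subgraph G A) = edges G \<inter> (A \<times> UNIV \<times> A)"
  by (simp_all add: induced_subgraph_def verts_def edges_def)

lemma is_pregraph_induced_subgraph: "is_pregraph (induced_subgraph G A)"
  by (auto simp: is_pregraph_def)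

lemma satisfies_mono:
  "satisfies H W \<Longrightarrow> verts G \<subseteq> verts H \<Longrightarrow> edges G \<subseteq> edges H \<Longrightarrow> satisfies G W"
  unfolding satisfies_def by blast

lemma fpath_avoids_succ_closed:
  assumes "fpath E a es b" "succ_closed E X" "E \<subseteq> V \<times> UNIV \<times> V" "b \<in> V - X"
  shows "fpath (E \<inter> ((V - X) \<times> UNIV \<times> (V - X))) a es b"
  using assms(1)
proof (induction es arbitrary: a)
  case Nil
  then show ?case using assms(4) by simp
next
  case (Cons e es)
  obtain c a' where e: "e = (a, c, a')" and edge: "(a, c, a') \<in> E" and path: "fpath E a' es b"
    using Cons.prems by (cases e) auto
  have "a' \<in> V - X"
    using edge assms(3) fpath_succ_closed[OF path assms(2)] assms(4) by blast
  moreover from this have "a \<in> V - X"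
    using edge assms(2,3) unfolding succ_closed_def by blast
  ultimately show ?case using Cons.IH[OF path] e edge by simp
qed

lemma is_pretree_induced_diff:
  assumes T: "is_pretree T t0" and X: "succ_closed (edges T) X" and "\<not> verts T \<subseteq> X"
  shows "is_pretree (induced_subgraph T (verts T - X)) t0"
proof -
  have pg: "edges T \<subseteq> verts T \<times> UNIV \<times> verts T" and t0: "t0 \<in> verts T"
    using T by (auto simp: is_pretree_def is_pregraph_def)
  have path: "\<exists>es. fpath (edges T) t0 es t" if "t \<in> verts T" for t
    using T that unfolding is_pretree_def by (meson ex1_implies_ex)
  have path_unique: "es = es'" if "fpath (edges T) t0 es t" "fpath (edges T) t0 es' t" for es es' t
  proof -
    have "t \<in> verts T"
      using that(1) pg t0 by (cases es rule: rev_cases) (auto simp: fpath_append)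
    then have "\<exists>!es. fpath (edges T) t0 es t" using T unfolding is_pretree_def by blast
    with that show ?thesis by (auto simp: Ex1_def)
  qed
  have "t0 \<notin> X"
  proof
    assume "t0 \<in> X"
    obtain b where b: "b \<in> verts T - X" using assms(3) by blast
    then obtain es where "fpath (edges T) t0 es b" using path by blast
    then have "b \<in> X" using X \<open>t0 \<in> X\<close> by (rule fpath_succ_closed)
    with b show False by blast
  qed
  have "\<exists>!es. fpath (edges T \<inter> ((verts T - X) \<times> UNIV \<times> (verts T - X))) t0 es t"
    if t: "t \<in> verts T - X" for t
  proof -
    obtain es where es: "fpath (edges T) t0 es t" using path t by blast
    show ?thesis
    proof (rule ex1I)
      show "fpath (edges T \<inter> ((verts T - X) \<times> UNIV \<times> (verts T - X))) t0 es t"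
        using es X pg t by (rule fpath_avoids_succ_closed)
    next
      fix es' assume "fpath (edges T \<inter> ((verts T - X) \<times> UNIV \<times> (verts T - X))) t0 es' t"
      then have "fpath (edges T) t0 es' t" by (rule fpath_mono) blast
      then show "es' = es" using es by (rule path_unique)
    qed
  qed
  then show ?thesis
    using t0 \<open>t0 \<notin> X\<close> by (auto simp: is_pretree_def is_pregraph_def)
qed

lemma verts_subtree: "verts (subtree G t) = {v \<in> verts G. \<exists>es. fpath (edges G) t es v}"
  by (simp add: subtree_def Let_def verts_def)

lemma subtree_eq_induced_subgraph: "subtree G t = induced_subgraph G (verts (subtree G t))"
  by (simp add: subtree_def induced_subgraph_def Let_def verts_def edges_def)

lemma induced_subgraph_induced_subgraph:
  "B \<subseteq> A \<Longrightarrow> induced_subgraph (induced_subgraph G A) B = induced_subgraph G B"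
  by (auto simp: induced_subgraph_def edges_def)

lemma root_in_verts_subtree: "t \<in> verts G \<Longrightarrow> t \<in> verts (subtree G t)"
  unfolding verts_subtree by (auto intro: exI[of _ "[]"])

lemma succ_closed_subtree:
  assumes "is_pregraph G"
  shows "succ_closed (edges G) (verts (subtree G t))"
  unfolding succ_closed_def
proof (intro allI impI)
  fix v c w assume edge: "(v, c, w) \<in> edges G" and "v \<in> verts (subtree G t)"
  then obtain es where "fpath (edges G) t es v" unfolding verts_subtree by blast
  then have "fpath (edges G) t (es @ [(v, c, w)]) w" using edge by (simp add: fpath_append)
  moreover have "w \<in> verts G" using edge assms by (auto simp: is_pregraph_def)
  ultimately show "w \<in> verts (subtree G t)" unfolding verts_subtree by blast
qed

lemma succ_closed_Un_diff:
  assumes "E \<subseteq> V \<times> UNIV \<times> V" "succ_closed E X" "succ_closed (E \<inter> ((V - X) \<times> UNIV \<times> (V - X))) B"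
  shows "succ_closed E (X \<union> B)"
  unfolding succ_closed_def
proof (intro allI impI)
  fix v c w assume edge: "(v, c, w) \<in> E" and v: "v \<in> X \<union> B"
  show "w \<in> X \<union> B"
  proof (cases "v \<in> X \<or> w \<in> X")
    case True
    then show ?thesis using edge assms(2) unfolding succ_closed_def by blast
  next
    case False
    then have "(v, c, w) \<in> E \<inter> ((V - X) \<times> UNIV \<times> (V - X))" "v \<in> B"
      using edge v assms(1) by auto
    then show ?thesis using assms(3) unfolding succ_closed_def by blast
  qed
qed

lemma succ_closed_Un_subtree_diff:
  assumes "is_pregraph T" "succ_closed (edges T) X"
  shows "succ_closed (edges T) (X \<union> verts (subtree (induced_subgraph T (verts T - X)) t))"
proof (rule succ_closed_Un_diff)
  show "edges T \<subseteq> verts T \<times> UNIV \<times> verts T" using assms(1) by (simp add: is_pregraph_def)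
  show "succ_closed (edges T \<inter> ((verts T - X) \<times> UNIV \<times> (verts T - X)))
      (verts (subtree (induced_subgraph T (verts T - X)) t))"
    using succ_closed_subtree[OF is_pregraph_induced_subgraph] by simp
qed (rule assms(2))

lemma Well_order_descending_chain_stabilizes:
  assumes "Well_order r" and desc: "\<And>i. (l (Suc i), l i) \<in> r"
  obtains N where "\<And>i. N \<le> i \<Longrightarrow> l i = l N"
proof -
  interpret wo_rel r using assms(1) by (rule wo_rel.intro)
  have below: "(l j, l i) \<in> r" if "i \<le> j" for i j
    using that
  proof (induction j rule: dec_induct)
    case base
    show ?case using desc[of i] REFL by (auto simp: refl_on_def Field_def)
  next
    case (step j)
    then show ?case using desc[of j] TRANS by (meson transD)
  qed
  obtain m where "m \<in> range l" and "\<And>y. (y, m) \<in> r - Id \<Longrightarrow> y \<notin> range l"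
    using wfE_min[OF WF, of "l 0" "range l"] by blast
  then obtain N where "\<And>i. (l i, l N) \<notin> r - Id" by blast
  with below have "l i = l N" if "N \<le> i" for i
    using that by blast
  then show thesis by (rule that)
qed

lemma prefix_independent_shift:
  assumes "prefix_independent W"
  shows "(\<lambda>i. w (n + i)) \<in> W \<longleftrightarrow> w \<in> W"
proof -
  have "conc (map w [0..<n]) (\<lambda>i. w (n + i)) \<in> W \<longleftrightarrow> (\<lambda>i. w (n + i)) \<in> W"
    using assms unfolding prefix_independent_def by blast
  moreover have "conc (map w [0..<n]) (\<lambda>i. w (n + i)) = w" by (auto simp: conc_def)
  ultimately show ?thesis by simp
qed

lemma verts_lex_prod: "verts (lex_prod U r) = verts U \<times> Field r"
  by (simp add: lex_prod_def verts_def)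

lemma edges_lex_prod:
  "((v, l), c, (v', l')) \<in> edges (lex_prod U r) \<longleftrightarrow>
     v \<in> verts U \<and> v' \<in> verts U \<and> l \<in> Field r \<and> l' \<in> Field r \<and>
     (l' \<in> underS r l \<or> l = l' \<and> (v, c, v') \<in> edges U)"
  unfolding lex_prod_def edges_def underS_def by (simp add: conj_commute)

lemma satisfiesD:
  "satisfies G W \<Longrightarrow> vs 0 \<in> verts G \<Longrightarrow> (\<And>i. (vs i, cs i, vs (Suc i)) \<in> edges G) \<Longrightarrow> cs \<in> W"
  unfolding satisfies_def by blast

lemma satisfies_lex_prod:
  assumes "prefix_independent W" "Well_order r" "satisfies U W"
  shows "satisfies (lex_prod U r) W"
  unfolding satisfies_def
proof (intro allI impI)
  fix vs cs
  assume "vs 0 \<in> verts (lex_prod U r) \<and> (\<forall>i. (vs i, cs i, vs (Suc i)) \<in> edges (lex_prod U r))"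
  then have "((fst (vs i), snd (vs i)), cs i, (fst (vs (Suc i)), snd (vs (Suc i)))) \<in> edges (lex_prod U r)" for i
    by simp
  then have step: "fst (vs i) \<in> verts U \<and> snd (vs i) \<in> Field r \<and>
      (snd (vs (Suc i)) \<in> underS r (snd (vs i)) \<or>
       snd (vs i) = snd (vs (Suc i)) \<and> (fst (vs i), cs i, fst (vs (Suc i))) \<in> edges U)" for i
    unfolding edges_lex_prod by blast
  have "(snd (vs (Suc i)), snd (vs i)) \<in> r" for i
    using step[of i] wo_rel.REFL[OF wo_rel.intro[OF assms(2)]] by (auto simp: underS_def refl_on_def)
  then obtain N where N: "\<And>i. N \<le> i \<Longrightarrow> snd (vs i) = snd (vs N)"
    using Well_order_descending_chain_stabilizes[OF assms(2), of "\<lambda>i. snd (vs i)"] by blast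
  have "(fst (vs (N + i)), cs (N + i), fst (vs (Suc (N + i)))) \<in> edges U" for i
    using step[of "N + i"] N[of "N + i"] N[of "Suc (N + i)"] by (auto simp: underS_def)
  moreover have "fst (vs N) \<in> verts U" using step[of N] by blast
  ultimately have "(\<lambda>i. cs (N + i)) \<in> W"
    by (intro satisfiesD[OF assms(3), of "\<lambda>i. fst (vs (N + i))"]) simp_all
  then show "cs \<in> W" using prefix_independent_shift[OF assms(1)] by blast
qed

lemma is_morphism_lex_prodI:
  assumes "is_pregraph T"
    and verts: "\<And>v. v \<in> verts T \<Longrightarrow> \<psi> v \<in> verts U \<and> lev v \<in> Field r"
    and edges: "\<And>v c w. (v, c, w) \<in> edges T \<Longrightarrow>
       lev w \<in> underS r (lev v) \<or> lev w = lev v \<and> (\<psi> v, c, \<psi> w) \<in> edges U"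
  shows "is_morphism T (lex_prod U r) (\<lambda>v. (\<psi> v, lev v))"
  unfolding is_morphism_def
proof (intro conjI ballI allI impI)
  fix v assume "v \<in> verts T"
  then show "(\<psi> v, lev v) \<in> verts (lex_prod U r)" using verts by (simp add: verts_lex_prod)
next
  fix v c w assume edge: "(v, c, w) \<in> edges T"
  then have "v \<in> verts T" "w \<in> verts T" using assms(1) by (auto simp: is_pregraph_def)
  then show "((\<psi> v, lev v), c, (\<psi> w, lev w)) \<in> edges (lex_prod U r)"
    using verts edges[OF edge] unfolding edges_lex_prod by auto
qed

definition layers :: "'k rel \<Rightarrow> ('a set \<Rightarrow> 'a set) \<Rightarrow> 'k \<Rightarrow> 'a set" where
  "layers r blk = wo_rel.worec r (\<lambda>S l. \<Union>\<mu>\<in>underS r l. S \<mu> \<union> blk (S \<mu>))"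

lemma layers_eq:
  assumes "Well_order r"
  shows "layers r blk l = (\<Union>\<mu>\<in>underS r l. layers r blk \<mu> \<union> blk (layers r blk \<mu>))"
proof -
  interpret wo_rel r using assms by (rule wo_rel.intro)
  have "adm_wo (\<lambda>S l. \<Union>\<mu>\<in>underS l. S \<mu> \<union> blk (S \<mu>))"
    unfolding adm_wo_def by auto
  from fun_cong[OF worec_fixpoint[OF this], of l] show ?thesis
    unfolding layers_def by simp
qed

lemma layers_eq_UN_blocks:
  assumes "Well_order r"
  shows "layers r blk l = (\<Union>\<mu>\<in>underS r l. blk (layers r blk \<mu>))"
proof -
  interpret wo_rel r using assms by (rule wo_rel.intro)
  show ?thesis
  proof (induction l rule: well_order_induct)
    case (1 l)
    have "layers r blk \<mu> \<subseteq> (\<Union>\<nu>\<in>underS l. blk (layers r blk \<nu>))" if "\<mu> \<in> underS l" for \<mu>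
    proof -
      have "underS \<mu> \<subseteq> underS l"
        using that TRANS ANTISYM by (auto simp: underS_def dest: transD antisymD)
      moreover have "layers r blk \<mu> = (\<Union>\<nu>\<in>underS \<mu>. blk (layers r blk \<nu>))"
        using 1 that unfolding underS_def by blast
      ultimately show ?thesis by blast
    qed
    then show ?case by (subst layers_eq[OF WELL]) blast
  qed
qed

lemma succ_closed_layers:
  assumes "Well_order r" "\<And>X. succ_closed E X \<Longrightarrow> succ_closed E (X \<union> blk X)"
  shows "succ_closed E (layers r blk l)"
proof -
  interpret wo_rel r using assms(1) by (rule wo_rel.intro)
  show ?thesis
  proof (induction l rule: well_order_induct)
    case (1 l)
    then show ?case
      by (subst layers_eq[OF WELL]) (auto intro!: succ_closed_UN assms(2) simp: underS_def)
  qed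
qed

lemma layers_exhaust:
  assumes wo: "Well_order r" and small: "|V| <o |Field r|"
    and blk_subset: "\<And>l. blk (layers r blk l) \<subseteq> V - layers r blk l"
    and blk_nonempty: "\<And>l. \<not> V \<subseteq> layers r blk l \<Longrightarrow> blk (layers r blk l) \<noteq> {}"
  obtains l where "l \<in> Field r" "V \<subseteq> layers r blk l"
proof -
  interpret wo_rel r using wo by (rule wo_rel.intro)
  have "\<exists>l\<in>Field r. V \<subseteq> layers r blk l"
  proof (rule ccontr)
    assume "\<not> ?thesis"
    then have blk_ne: "blk (layers r blk l) \<noteq> {}" if "l \<in> Field r" for l
      using that blk_nonempty by blast
    define f where "f l = (SOME v. v \<in> blk (layers r blk l))" for l
    have f: "f l \<in> blk (layers r blk l)" if "l \<in> Field r" for l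
      unfolding f_def using blk_ne[OF that] by (simp add: some_in_eq)
    have f_below: "f \<mu> \<noteq> f l" if "\<mu> \<in> underS l" "\<mu> \<in> Field r" "l \<in> Field r" for \<mu> l
    proof -
      have "f \<mu> \<in> layers r blk l"
        using f[OF that(2)] that(1) layers_eq_UN_blocks[OF wo, of blk l] by blast
      moreover have "f l \<notin> layers r blk l" using f[OF that(3)] blk_subset by blast
      ultimately show ?thesis by auto
    qed
    have "inj_on f (Field r)"
    proof (rule inj_onI, rule ccontr)
      fix l l' assume l: "l \<in> Field r" "l' \<in> Field r" "f l = f l'" "l \<noteq> l'"
      then have "l \<in> underS l' \<or> l' \<in> underS l" using TOTALS unfolding underS_def by blast
      then show False using f_below[of l l'] f_below[of l' l] l by auto
    qed
    moreover have "f ` Field r \<subseteq> V" using f blk_subset by blast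
    ultimately have "|Field r| \<le>o |V|" using card_of_ordLeq by blast
    with small show False using not_ordLess_ordLeq by blast
  qed
  then show thesis using that by blast
qed

lemma layers_levels:
  assumes wo: "Well_order r" and small: "|V| <o |Field r|"
    and succ_closed_blk: "\<And>X. succ_closed E X \<Longrightarrow> succ_closed E (X \<union> blk X)"
    and blk_subset: "\<And>X. succ_closed E X \<Longrightarrow> blk X \<subseteq> V - X"
    and blk_nonempty: "\<And>X. succ_closed E X \<Longrightarrow> \<not> V \<subseteq> X \<Longrightarrow> blk X \<noteq> {}"
  obtains lev where "\<And>v. v \<in> V \<Longrightarrow> lev v \<in> Field r \<and> v \<in> blk (layers r blk (lev v))"
    and "\<And>v c w. (v, c, w) \<in> E \<Longrightarrow> v \<in> V \<Longrightarrow> w \<in> V \<Longrightarrow> lev w = lev v \<or> lev w \<in> underS r (lev v)"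
proof -
  interpret wo_rel r using wo by (rule wo_rel.intro)
  have closed: "succ_closed E (layers r blk l)" for l
    using wo succ_closed_blk by (rule succ_closed_layers)
  obtain l0 where "V \<subseteq> layers r blk l0"
    using layers_exhaust[OF wo small blk_subset[OF closed] blk_nonempty[OF closed]] by blast
  have in_block: "\<exists>l. l \<in> Field r \<and> v \<in> blk (layers r blk l)" if "v \<in> V" for v
  proof -
    have "v \<in> (\<Union>\<mu>\<in>underS l0. blk (layers r blk \<mu>))"
      using that \<open>V \<subseteq> layers r blk l0\<close> layers_eq_UN_blocks[OF wo, of blk l0] by blast
    then obtain \<mu> where "\<mu> \<in> underS l0" "v \<in> blk (layers r blk \<mu>)" by blast
    moreover from this(1) have "\<mu> \<in> Field r" unfolding underS_def Field_def by blast
    ultimately show ?thesis by blast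
  qed
  define lev where "lev v = (SOME l. l \<in> Field r \<and> v \<in> blk (layers r blk l))" for v
  have lev: "lev v \<in> Field r \<and> v \<in> blk (layers r blk (lev v))" if "v \<in> V" for v
    unfolding lev_def using in_block[OF that] by (rule someI_ex)
  moreover have "lev w = lev v \<or> lev w \<in> underS (lev v)"
    if edge: "(v, c, w) \<in> E" and "v \<in> V" "w \<in> V" for v c w
  proof (rule ccontr)
    assume "\<not> ?thesis"
    moreover have "(lev v, lev w) \<in> r \<or> (lev w, lev v) \<in> r"
      using TOTALS lev[OF \<open>v \<in> V\<close>] lev[OF \<open>w \<in> V\<close>] by blast
    ultimately have "lev v \<in> underS (lev w)" unfolding underS_def by auto
    then have "v \<in> layers r blk (lev w)"
      using lev[OF \<open>v \<in> V\<close>] layers_eq_UN_blocks[OF wo, of blk "lev w"] by blast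
    then have "w \<in> layers r blk (lev w)" using closed edge unfolding succ_closed_def by blast
    then show False using lev[OF \<open>w \<in> V\<close>] blk_subset[OF closed] by blast
  qed
  ultimately show thesis by (rule that)
qed

lemma almost_universal_block:
  fixes T :: "('t, 'c) pregraph" and U :: "('v, 'c) pregraph"
  assumes au: "almost_universal r W U TYPE('t)"
    and T: "is_pretree T t0" "|verts T| <o r" "satisfies T W"
    and X: "succ_closed (edges T) X" "\<not> verts T \<subseteq> X"
  shows "\<exists>t (\<phi> :: 't \<Rightarrow> 'v). t \<in> verts T - X \<and> is_morphism (subtree (induced_subgraph T (verts T - X)) t) U \<phi>"
proof -
  let ?T' = "induced_subgraph T (verts T - X)"
  have "is_pretree ?T' t0" using T(1) X by (rule is_pretree_induced_diff)
  moreover have "|verts ?T'| <o r"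
    using card_of_mono1[of "verts T - X" "verts T"] T(2) ordLeq_ordLess_trans by auto
  moreover have "satisfies ?T' W" using T(3) by (rule satisfies_mono) auto
  ultimately have "\<exists>t\<in>verts ?T'. \<exists>\<phi> :: 't \<Rightarrow> 'v. is_morphism (subtree ?T' t) U \<phi>"
    using au unfolding almost_universal_def by blast
  then show ?thesis unfolding verts_induced_subgraph by blast
qed

definition peeling_into ::
  "('t, 'c) pregraph \<Rightarrow> ('v, 'c) pregraph \<Rightarrow> ('t set \<Rightarrow> 't set) \<Rightarrow> ('t set \<Rightarrow> 't \<Rightarrow> 'v) \<Rightarrow> bool" where
  "peeling_into T U blk \<phi> \<longleftrightarrow> (\<forall>X. succ_closed (edges T) X \<longrightarrow>
     succ_closed (edges T) (X \<union> blk X) \<and> blk X \<subseteq> verts T - X \<and>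
     (\<not> verts T \<subseteq> X \<longrightarrow> blk X \<noteq> {}) \<and> is_morphism (induced_subgraph T (blk X)) U (\<phi> X))"

lemma almost_universal_peeling:
  fixes T :: "('t, 'c) pregraph" and U :: "('v, 'c) pregraph"
  assumes au: "almost_universal r W U TYPE('t)"
    and T: "is_pretree T t0" "|verts T| <o r" "satisfies T W"
  shows "\<exists>blk \<phi>. peeling_into T U blk \<phi>"
proof -
  have pg: "is_pregraph T" using T(1) by (simp add: is_pretree_def)
  let ?sub = "\<lambda>X t. subtree (induced_subgraph T (verts T - X)) t"
  define pick where
    "pick X = (SOME p. fst p \<in> verts T - X \<and> is_morphism (?sub X (fst p)) U (snd p))" for X
  have pick: "fst (pick X) \<in> verts T - X \<and> is_morphism (?sub X (fst (pick X))) U (snd (pick X))"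
    if X: "succ_closed (edges T) X" "\<not> verts T \<subseteq> X" for X
  proof -
    obtain t \<phi> where "t \<in> verts T - X" "is_morphism (?sub X t) U \<phi>"
      using almost_universal_block[OF au T X] by blast
    then have "\<exists>p. fst p \<in> verts T - X \<and> is_morphism (?sub X (fst p)) U (snd p)" by auto
    then show ?thesis unfolding pick_def by (rule someI_ex)
  qed
  define blk where "blk X = (if verts T \<subseteq> X then {} else verts (?sub X (fst (pick X))))" for X
  have blk_subset: "blk X \<subseteq> verts T - X" for X
    unfolding blk_def verts_subtree by auto
  have "peeling_into T U blk (\<lambda>X. snd (pick X))"
    unfolding peeling_into_def
  proof (intro allI impI conjI)
    fix X assume X: "succ_closed (edges T) X"
    show "blk X \<subseteq> verts T - X" by (rule blk_subset)
    show "succ_closed (edges T) (X \<union> blk X)"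
      using succ_closed_Un_subtree_diff[OF pg X] X unfolding blk_def by auto
    show "blk X \<noteq> {}" if "\<not> verts T \<subseteq> X"
      using pick[OF X that] root_in_verts_subtree[of "fst (pick X)" "induced_subgraph T (verts T - X)"] that
      unfolding blk_def by auto
    show "is_morphism (induced_subgraph T (blk X)) U (snd (pick X))"
    proof (cases "verts T \<subseteq> X")
      case True
      then show ?thesis by (simp add: blk_def is_morphism_def)
    next
      case False
      have "induced_subgraph T (blk X) = ?sub X (fst (pick X))"
        using blk_subset[of X] False unfolding blk_def
        by (subst subtree_eq_induced_subgraph) (simp add: induced_subgraph_induced_subgraph)
      then show ?thesis using pick[OF X False] by simp
    qed
  qed
  then show ?thesis by blast
qed

lemma peeling_into_lex_prod:
  assumes "is_pregraph T" "Well_order r" "|verts T| <o |Field r|" "peeling_into T U blk \<phi>"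
  shows "\<exists>\<psi>. is_morphism T (lex_prod U r) \<psi>"
proof -
  have blk_closed: "\<And>X. succ_closed (edges T) X \<Longrightarrow> succ_closed (edges T) (X \<union> blk X)"
    and blk_subset: "\<And>X. succ_closed (edges T) X \<Longrightarrow> blk X \<subseteq> verts T - X"
    and blk_nonempty: "\<And>X. succ_closed (edges T) X \<Longrightarrow> \<not> verts T \<subseteq> X \<Longrightarrow> blk X \<noteq> {}"
    and blk_morphism: "\<And>X. succ_closed (edges T) X \<Longrightarrow> is_morphism (induced_subgraph T (blk X)) U (\<phi> X)"
    using assms(4) unfolding peeling_into_def by blast+
  obtain lev where lev: "\<And>v. v \<in> verts T \<Longrightarrow> lev v \<in> Field r \<and> v \<in> blk (layers r blk (lev v))"
    and lev_edge: "\<And>v c w. (v, c, w) \<in> edges T \<Longrightarrow> v \<in> verts T \<Longrightarrow> w \<in> verts T \<Longrightarrow>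
        lev w = lev v \<or> lev w \<in> underS r (lev v)"
    using layers_levels[OF assms(2,3) blk_closed blk_subset blk_nonempty] by blast
  let ?X = "\<lambda>v. layers r blk (lev v)"
  have mor: "is_morphism (induced_subgraph T (blk (?X v))) U (\<phi> (?X v))" for v
    using blk_morphism succ_closed_layers[OF assms(2) blk_closed] by blast
  have "is_morphism T (lex_prod U r) (\<lambda>v. (\<phi> (?X v) v, lev v))"
  proof (rule is_morphism_lex_prodI[OF assms(1)])
    fix v assume "v \<in> verts T"
    then show "\<phi> (?X v) v \<in> verts U \<and> lev v \<in> Field r"
      using mor lev unfolding is_morphism_def by simp
  next
    fix v c w assume edge: "(v, c, w) \<in> edges T"
    then have v: "v \<in> verts T" and w: "w \<in> verts T" using assms(1) by (auto simp: is_pregraph_def)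
    show "lev w \<in> underS r (lev v) \<or> lev w = lev v \<and> (\<phi> (?X v) v, c, \<phi> (?X w) w) \<in> edges U"
    proof (cases "lev w = lev v")
      case True
      then have "(v, c, w) \<in> edges (induced_subgraph T (blk (?X v)))"
        using edge lev[OF v] lev[OF w] by simp
      then show ?thesis using mor[of v] True unfolding is_morphism_def by simp
    qed (use lev_edge[OF edge v w] in blast)
  qed
  then show ?thesis by blast
qed

theorem lemma3p8:
  fixes W :: "(nat \<Rightarrow> 'c) set" and r :: "'k rel" and U :: "('v, 'c) pregraph"
  assumes "prefix_independent W"
    and "Card_order r"
    and "is_cgraph U"
    and "almost_universal r W U TYPE('t)"
  shows "universal_pi r W (lex_prod U r) TYPE('t)"
proof -
  have wo: "Well_order r" using assms(2) by (rule card_order_on_well_order_on)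
  have "satisfies U W" using assms(4) by (simp add: almost_universal_def)
  with assms(1) wo have "satisfies (lex_prod U r) W" by (rule satisfies_lex_prod)
  moreover have "\<exists>\<phi>. is_morphism T (lex_prod U r) \<phi>"
    if T: "is_pretree T t0" "|verts T| <o r" "satisfies T W" for T :: "('t, 'c) pregraph" and t0
  proof -
    have "is_pregraph T" using T(1) by (simp add: is_pretree_def)
    moreover have "|verts T| <o |Field r|"
      using T(2) card_of_Field_ordIso[OF assms(2)] ordIso_symmetric ordLess_ordIso_trans by blast
    moreover obtain blk \<phi> where "peeling_into T U blk (\<phi> :: 't set \<Rightarrow> 't \<Rightarrow> 'v)"
      using almost_universal_peeling[OF assms(4) T] by blast
    ultimately show ?thesis using wo by (intro peeling_into_lex_prod)
  qed
  ultimately show ?thesis unfolding universal_pi_def by blast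
qed

end
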